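(* Let $\mathcal D$ be a real-label template data distribution in which every template $z\in\mathrm{supp}(\mu_{\mathrm{tmplt}})$ consists only of wildcards ($z\in\mathcal W^k$), and suppose the label function $f_*$ is non-constant on $\mathrm{supp}(\mu_{\mathrm{tmplt}})$. Let $\mathcal X_{uns}$ be as below and assume $|\mathcal X_{uns}|\ge k$. Then for any SGD step $t$ and any step sizes, there is a string $x\in\mathcal X_{uns}^k$ matching some template $z\in\mathrm{supp}(\mu_{\mathrm{tmplt}})$ such that $$\mathbb E_{\theta^t}\big[(f_{\mathrm{MLP}}(x;\theta^t)-f_*(z))^2\big]\ge c>0,$$ where $c$ depends only on $\mu_{\mathrm{tmplt}}$ and $f_*$.
   Context: Let $\mathcal X$ be a finite alphabet of tokens with $m=|\mathcal X|$, and $\mathcal W$ a finite alphabet of wildcards disjoint from $\mathcal X$. A template is a string $z\in(\mathcal X\cup\mathcal W)^k$. A substitution map is an injective function $s:\mathcal W\to\mathcal X$; $\mathrm{sub}(z,s)\in\mathcal X^k$ denotes the string with $i$-th entry $z_i$ if $z_i\in\mathcal X$ and $s(z_i)$ if $z_i\in\mathcal W$. A string $x\in\mathcal X^k$ matches template $z$ if $x=\mathrm{sub}(z,s)$ for some substitution map $s$ with $s(\mathcal W)\cap\{z_1,\dots,z_k\}=\emptyset$. A real-label template data distribution $\mathcal D(\mu_{\mathrm{tmplt}},\{\mu_{sub,z}\}_z,f_*,\sigma)$ is given by a distribution $\mu_{\mathrm{tmplt}}$ on templates, for each $z\in\mathrm{supp}(\mu_{\mathrm{tmplt}})$ a distribution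 $\mu_{sub,z}$ on substitution maps, a label function $f_*:\mathrm{supp}(\mu_{\mathrm{tmplt}})\to\mathbb R$ and a noise level $\sigma\ge 0$; a sample is $(x,y)=(\mathrm{sub}(z,s),f_*(z)+\xi)$ with $z\sim\mu_{\mathrm{tmplt}}$, $s\sim\mu_{sub,z}$, $\xi\sim N(0,\sigma^2)$ independent. $\mathcal X=\mathcal X_{seen}\sqcup\mathcal X_{uns}$, where $\mathcal X_{seen}$ is the smallest set with $x\in\mathcal X_{seen}^k$ almost surely for $(x,y)\sim\mathcal D$. The MLP with depth $L$, width $d$ and differentiable activation $\phi$ has weights $\theta=\{W_1,\dots,W_L,w\}$ with $W_1\in\mathbb R^{d\times km}$, $W_\ell\in\mathbb R^{d\times d}$ ($\ell\ge2$), $w\in\mathbb R^d$, and outputs $f_{\mathrm{MLP}}(x;\theta)=w^Tz_L(x;\theta)$ where $z_0(x)=(e_{x_1},\dots,e_{x_k})\in\mathbb R^{km}$ and $z_\ell(x;\theta)=\phi(W_\ell z_{\ell-1}(x;\theta))$ elementwise. One-pass SGD: $\theta^0$ has independent Gaussian entries, i.i.d. within each of $W_1^0,\dots,W_L^0,w^0$; then $\theta^s=\theta^{s-1}-\eta_s\nabla_\theta(f_{\mathrm{MLP}}(x^s;\theta)-y^s)^2|_{\theta=\theta^{s-1}}$ with fresh independent samples $(x^s,y^s)\sim\mathcal D$ and step sizes $\eta_s>0$. *)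

theory Defs
  imports "HOL-Probability.Probability"
begin

text \<open>Tokens have type 'x, wildcards type 'w (disjoint by construction);
  a template entry is of type 'x + 'w (Inl = token, Inr = wildcard).
  Strings and templates are lists (of length k).\<close>

type_synonym ('x, 'w) template = "('x + 'w) list"

definition sub :: "('x, 'w) template \<Rightarrow> ('w \<Rightarrow> 'x) \<Rightarrow> 'x list" where
  "sub z s = map (case_sum id s) z"

definition matches :: "'x list \<Rightarrow> ('x, 'w) template \<Rightarrow> bool" where
  "matches x z \<longleftrightarrow> (\<exists>s::'w \<Rightarrow> 'x. inj s \<and> range s \<inter> {a. Inl a \<in> set z} = {} \<and> x = sub z s)"

definition noise :: "real \<Rightarrow> real measure" where
  "noise \<sigma> = (if \<sigma> = 0 then return borel 0 else density lborel (normal_density 0 \<sigma>))"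

definition template_data :: "nat \<Rightarrow> ('x, 'w) template pmf \<Rightarrow> (('x, 'w) template \<Rightarrow> ('w \<Rightarrow> 'x) pmf)
    \<Rightarrow> real \<Rightarrow> bool" where
  "template_data k \<mu> \<mu>sub \<sigma> \<longleftrightarrow> \<sigma> \<ge> 0 \<and> (\<forall>z \<in> set_pmf \<mu>. length z = k) \<and>
      (\<forall>z \<in> set_pmf \<mu>. \<forall>s \<in> set_pmf (\<mu>sub z). inj s)"

definition data_dist :: "('x, 'w) template pmf \<Rightarrow> (('x, 'w) template \<Rightarrow> ('w \<Rightarrow> 'x) pmf)
    \<Rightarrow> (('x, 'w) template \<Rightarrow> real) \<Rightarrow> real \<Rightarrow> ('x list \<times> real) measure" where
  "data_dist \<mu> \<mu>sub fstar \<sigma> =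
     distr (measure_pmf (bind_pmf \<mu> (\<lambda>z. map_pmf (\<lambda>s. (z, s)) (\<mu>sub z))) \<Otimes>\<^sub>M noise \<sigma>)
           (count_space UNIV \<Otimes>\<^sub>M borel)
           (\<lambda>((z, s), \<xi>). (sub z s, fstar z + \<xi>))"

definition X_seen :: "('x list \<times> real) measure \<Rightarrow> 'x set" where
  "X_seen D = \<Inter> {S. AE p in D. set (fst p) \<subseteq> S}"

definition X_uns :: "('x list \<times> real) measure \<Rightarrow> 'x set" where
  "X_uns D = UNIV - X_seen D"

text \<open>Parameter indices: PW1 r i a is the entry of W_1 in row r and column (i,a)
  (position i, token a, i.e. the coordinate of e_{x_i} in block i of z_0);
  PW l r j is entry (r,j) of W_l (l >= 2); Pw r is entry r of w.\<close>
datatype 'x pidx = PW1 nat nat 'x | PW nat nat nat | Pw nat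

definition params :: "nat \<Rightarrow> nat \<Rightarrow> nat \<Rightarrow> 'x pidx set" where
  "params k L d =
     {PW1 r i a | r i a. r < d \<and> i < k} \<union> {PW l r j | l r j. 2 \<le> l \<and> l \<le> L \<and> r < d \<and> j < d}
     \<union> {Pw r | r. r < d}"

text \<open>Group of a parameter: 1 for W_1, l for W_l, 0 for w (entries i.i.d. within a group).\<close>
fun pgroup :: "'x pidx \<Rightarrow> nat" where
  "pgroup (PW1 _ _ _) = 1"
| "pgroup (PW l _ _) = l"
| "pgroup (Pw _) = 0"

definition z0 :: "'x list \<Rightarrow> nat \<Rightarrow> 'x \<Rightarrow> real" where
  "z0 x i a = (if x ! i = a then 1 else 0)"

fun hidden :: "(real \<Rightarrow> real) \<Rightarrow> nat \<Rightarrow> nat \<Rightarrow> ('x::finite pidx \<Rightarrow> real) \<Rightarrow> 'x list \<Rightarrow> nat \<Rightarrow> nat \<Rightarrow> real" where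
  "hidden \<phi> k d \<theta> x 0 r = 0"
| "hidden \<phi> k d \<theta> x (Suc 0) r = \<phi> (\<Sum>i<k. \<Sum>a\<in>UNIV. \<theta> (PW1 r i a) * z0 x i a)"
| "hidden \<phi> k d \<theta> x (Suc (Suc l)) r =
     \<phi> (\<Sum>j<d. \<theta> (PW (Suc (Suc l)) r j) * hidden \<phi> k d \<theta> x (Suc l) j)"

definition mlp :: "(real \<Rightarrow> real) \<Rightarrow> nat \<Rightarrow> nat \<Rightarrow> nat \<Rightarrow> ('x::finite pidx \<Rightarrow> real) \<Rightarrow> 'x list \<Rightarrow> real" where
  "mlp \<phi> k L d \<theta> x = (\<Sum>r<d. \<theta> (Pw r) * hidden \<phi> k d \<theta> x L r)"

definition sgd_step :: "(real \<Rightarrow> real) \<Rightarrow> nat \<Rightarrow> nat \<Rightarrow> nat \<Rightarrow> real \<Rightarrow> ('x list \<times> real)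
    \<Rightarrow> ('x::finite pidx \<Rightarrow> real) \<Rightarrow> ('x pidx \<Rightarrow> real)" where
  "sgd_step \<phi> k L d \<eta> xy \<theta> =
     restrict (\<lambda>p. \<theta> p - \<eta> * deriv (\<lambda>u. (mlp \<phi> k L d (\<theta>(p := u)) (fst xy) - snd xy)\<^sup>2) (\<theta> p))
              (params k L d)"

fun sgd :: "(real \<Rightarrow> real) \<Rightarrow> nat \<Rightarrow> nat \<Rightarrow> nat \<Rightarrow> (nat \<Rightarrow> real) \<Rightarrow> ('x::finite pidx \<Rightarrow> real)
    \<Rightarrow> (nat \<Rightarrow> 'x list \<times> real) \<Rightarrow> nat \<Rightarrow> ('x pidx \<Rightarrow> real)" where
  "sgd \<phi> k L d \<eta> \<theta>0 smp 0 = \<theta>0"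
| "sgd \<phi> k L d \<eta> \<theta>0 smp (Suc s) = sgd_step \<phi> k L d (\<eta> (Suc s)) (smp (Suc s)) (sgd \<phi> k L d \<eta> \<theta>0 smp s)"

definition init_measure :: "nat \<Rightarrow> nat \<Rightarrow> nat \<Rightarrow> (nat \<Rightarrow> real) \<Rightarrow> (nat \<Rightarrow> real) \<Rightarrow> ('x pidx \<Rightarrow> real) measure" where
  "init_measure k L d m sd = PiM (params k L d) (\<lambda>p. density lborel (normal_density (m (pgroup p)) (sd (pgroup p))))"

definition sgd_space :: "nat \<Rightarrow> nat \<Rightarrow> nat \<Rightarrow> (nat \<Rightarrow> real) \<Rightarrow> (nat \<Rightarrow> real) \<Rightarrow> ('x list \<times> real) measure \<Rightarrow> nat
    \<Rightarrow> (('x pidx \<Rightarrow> real) \<times> (nat \<Rightarrow> 'x list \<times> real)) measure" where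
  "sgd_space k L d m sd D t = init_measure k L d m sd \<Otimes>\<^sub>M PiM {1..t} (\<lambda>_. D)"

end

theory Submission
  imports Defs
begin

text \<open>Fix two strings \<open>x\<^sub>1, x\<^sub>2\<close> of unseen tokens matching templates with different labels
  \<open>a \<noteq> b\<close>, and let \<open>\<pi>\<^sub>i\<close> swap the tokens \<open>x\<^sub>1 ! i\<close> and \<open>x\<^sub>2 ! i\<close>. Relabelling the
  first-layer weights of position \<open>i\<close> by \<open>\<pi>\<^sub>i\<close> leaves the Gaussian initialisation invariant
  (entries of \<open>W\<^sub>1\<close> are i.i.d.), commutes with every SGD step on a training string (which
  contains only seen tokens, fixed by all \<open>\<pi>\<^sub>i\<close>), and turns the network output at \<open>x\<^sub>1\<close> into
  the output at \<open>x\<^sub>2\<close>. Hence \<open>f(x\<^sub>1; \<theta>\<^sup>t)\<close> and \<open>f(x\<^sub>2; \<theta>\<^sup>t)\<close> have the same law, and since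
  \<open>(u - a)\<^sup>2 + (u - b)\<^sup>2 \<ge> (a - b)\<^sup>2 / 2\<close>, one of the two expected squared errors is at least
  \<open>(a - b)\<^sup>2 / 4\<close>.\<close>

section \<open>Relabelling the first layer\<close>

definition relabel_first_layer :: "(nat \<Rightarrow> 'x \<Rightarrow> 'x) \<Rightarrow> 'x pidx \<Rightarrow> 'x pidx" where
  "relabel_first_layer \<pi> q = (case q of PW1 r i a \<Rightarrow> PW1 r i (\<pi> i a) | _ \<Rightarrow> q)"

lemma relabel_first_layer_in_params_iff [simp]:
  "relabel_first_layer \<pi> q \<in> params k L d \<longleftrightarrow> q \<in> params k L d"
  by (cases q) (auto simp: relabel_first_layer_def params_def)

lemma pgroup_relabel_first_layer [simp]: "pgroup (relabel_first_layer \<pi> q) = pgroup q"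
  by (cases q) (auto simp: relabel_first_layer_def)

lemma inj_relabel_first_layer:
  assumes "\<And>i. inj (\<pi> i)"
  shows "inj (relabel_first_layer \<pi>)"
proof (rule injI)
  fix p q
  assume "relabel_first_layer \<pi> p = relabel_first_layer \<pi> q"
  with assms show "p = q"
    by (cases p; cases q) (auto simp: relabel_first_layer_def inj_eq)
qed

lemma hidden_one:
  "hidden \<phi> k d \<theta> y (Suc 0) r = \<phi> (\<Sum>i<k. \<theta> (PW1 r i (y ! i)))"
  by (simp add: z0_def if_distrib cong: if_cong)

lemma hidden_relabel_first_layer:
  assumes "\<And>i. i < k \<Longrightarrow> \<pi> i (y ! i) = y' ! i"
  shows "hidden \<phi> k d (\<theta> \<circ> relabel_first_layer \<pi>) y l r = hidden \<phi> k d \<theta> y' l r"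
proof (induction l arbitrary: r)
  case (Suc l)
  then show ?case
    by (cases l) (simp_all add: hidden_one assms relabel_first_layer_def del: hidden.simps(2))
qed simp

lemma mlp_relabel_first_layer:
  assumes "\<And>i. i < k \<Longrightarrow> \<pi> i (y ! i) = y' ! i"
  shows "mlp \<phi> k L d (\<theta> \<circ> relabel_first_layer \<pi>) y = mlp \<phi> k L d \<theta> y'"
  using hidden_relabel_first_layer[where k=k and \<pi>=\<pi> and y=y and y'=y', OF assms]
  by (simp add: mlp_def relabel_first_layer_def)

lemma sgd_step_relabel_first_layer:
  assumes inj: "\<And>i. inj (\<pi> i)"
    and stable: "\<And>i. i < k \<Longrightarrow> \<pi> i (fst xy ! i) = fst xy ! i"
  shows "sgd_step \<phi> k L d \<eta> xy (\<theta> \<circ> relabel_first_layer \<pi>)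
       = sgd_step \<phi> k L d \<eta> xy \<theta> \<circ> relabel_first_layer \<pi>"
proof
  fix p
  have upd: "(\<theta> \<circ> relabel_first_layer \<pi>)(q := u) = \<theta>(relabel_first_layer \<pi> q := u) \<circ> relabel_first_layer \<pi>"
    for q u
    using inj_relabel_first_layer[OF inj] by (auto simp: fun_eq_iff inj_eq)
  show "sgd_step \<phi> k L d \<eta> xy (\<theta> \<circ> relabel_first_layer \<pi>) p
      = (sgd_step \<phi> k L d \<eta> xy \<theta> \<circ> relabel_first_layer \<pi>) p"
    unfolding sgd_step_def upd
    by (simp add: mlp_relabel_first_layer[where k=k and \<pi>=\<pi> and y="fst xy" and y'="fst xy", OF stable])
qed

lemma sgd_relabel_first_layer:
  assumes inj: "\<And>i. inj (\<pi> i)"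
    and stable: "\<And>j i. j \<in> {1..t} \<Longrightarrow> i < k \<Longrightarrow> \<pi> i (fst (smp j) ! i) = fst (smp j) ! i"
  shows "s \<le> t \<Longrightarrow> sgd \<phi> k L d \<eta> (\<theta> \<circ> relabel_first_layer \<pi>) smp s
                    = sgd \<phi> k L d \<eta> \<theta> smp s \<circ> relabel_first_layer \<pi>"
proof (induction s)
  case (Suc s)
  have "\<And>i. i < k \<Longrightarrow> \<pi> i (fst (smp (Suc s)) ! i) = fst (smp (Suc s)) ! i"
    using stable Suc.prems by simp
  with Suc show ?case
    by (simp del: comp_apply add: sgd_step_relabel_first_layer[OF inj])
qed simp

section \<open>Regularity of the network in the parameters\<close>

lemma fun_upd_differentiable: "(\<lambda>u. (\<theta>(p := u)) q) differentiable (at u0)"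
  by (cases "q = p") simp_all

lemma hidden_differentiable_param:
  assumes \<phi>: "\<And>u. \<phi> differentiable (at u)"
  shows "(\<lambda>u. hidden \<phi> k d (\<theta>(p := u)) y l r) differentiable (at u0)"
proof (induction l arbitrary: r)
  case (Suc l)
  have \<phi>_chain: "(\<lambda>u. \<phi> (f u)) differentiable (at u0)" if "f differentiable (at u0)" for f
    using differentiable_chain_at[OF that \<phi>] by (simp add: comp_def)
  show ?case
    using Suc.IH
    by (cases l) (auto intro!: \<phi>_chain differentiable_sum differentiable_mult fun_upd_differentiable
                       simp del: fun_upd_apply)
qed simp

lemma sq_loss_differentiable_param:
  assumes "\<And>u. \<phi> differentiable (at u)"
  shows "(\<lambda>u. (mlp \<phi> k L d (\<theta>(p := u)) y - c)\<^sup>2) differentiable (at u0)"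
  unfolding mlp_def power2_eq_square
  by (intro differentiable_mult differentiable_diff differentiable_sum ballI differentiable_const
        fun_upd_differentiable hidden_differentiable_param assms finite_lessThan)

lemma deriv_difference_quotient_LIMSEQ:
  fixes f :: "real \<Rightarrow> real"
  assumes "f differentiable (at x)"
  shows "(\<lambda>n. (f (x + inverse (real (Suc n))) - f x) / inverse (real (Suc n))) \<longlonglongrightarrow> deriv f x"
proof -
  have "((\<lambda>h. (f (x + h) - f x) / h) \<longlongrightarrow> deriv f x) (at 0)"
    using assms DERIV_deriv_iff_real_differentiable by (auto simp: DERIV_def)
  moreover have "(\<lambda>n. inverse (real (Suc n))) \<longlonglongrightarrow> 0"
    by (rule LIMSEQ_inverse_real_of_nat)
  ultimately show ?thesis
    unfolding LIMSEQ_SEQ_conv[symmetric] by (auto dest!: spec[of _ "\<lambda>n. inverse (real (Suc n))"])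
qed

lemma borel_measurable_deriv:
  fixes h :: "'a \<Rightarrow> real \<Rightarrow> real"
  assumes diff: "\<And>\<omega>. h \<omega> differentiable (at (U \<omega>))"
    and h: "\<And>V. V \<in> borel_measurable M \<Longrightarrow> (\<lambda>\<omega>. h \<omega> (V \<omega>)) \<in> borel_measurable M"
    and U: "U \<in> borel_measurable M"
  shows "(\<lambda>\<omega>. deriv (h \<omega>) (U \<omega>)) \<in> borel_measurable M"
proof (rule borel_measurable_LIMSEQ_real)
  fix \<omega>
  show "(\<lambda>n. (h \<omega> (U \<omega> + inverse (real (Suc n))) - h \<omega> (U \<omega>)) / inverse (real (Suc n)))
        \<longlonglongrightarrow> deriv (h \<omega>) (U \<omega>)"
    by (rule deriv_difference_quotient_LIMSEQ[OF diff])
next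
  fix n
  have "(\<lambda>\<omega>. h \<omega> (U \<omega> + inverse (real (Suc n)))) \<in> borel_measurable M"
    by (rule h) (use U in measurable)
  then show "(\<lambda>\<omega>. (h \<omega> (U \<omega> + inverse (real (Suc n))) - h \<omega> (U \<omega>)) / inverse (real (Suc n)))
             \<in> borel_measurable M"
    using h[OF U] by measurable
qed

lemma hidden_measurable:
  assumes \<phi>: "\<And>u. \<phi> differentiable (at u)"
    and \<Theta>: "\<And>q. (\<lambda>\<omega>. \<Theta> \<omega> q) \<in> borel_measurable M"
    and X: "X \<in> M \<rightarrow>\<^sub>M count_space UNIV"
  shows "(\<lambda>\<omega>. hidden \<phi> k d (\<Theta> \<omega>) (X \<omega>) l r) \<in> borel_measurable M"
proof (induction l arbitrary: r)
  case (Suc l)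
  have "continuous_on UNIV \<phi>"
    using \<phi> differentiable_imp_continuous_within continuous_at_imp_continuous_on by blast
  then have [measurable]: "\<phi> \<in> borel_measurable borel"
    by (rule borel_measurable_continuous_onI)
  have [measurable]: "(\<lambda>\<omega>. z0 (X \<omega>) i a) \<in> borel_measurable M" for i a
    using measurable_compose[OF X, of "\<lambda>x. z0 x i a" borel] by (simp add: comp_def)
  show ?case
    using Suc.IH \<Theta> by (cases l) simp_all
qed simp

lemma mlp_measurable:
  assumes \<phi>: "\<And>u. \<phi> differentiable (at u)"
    and \<Theta>: "\<And>q. (\<lambda>\<omega>. \<Theta> \<omega> q) \<in> borel_measurable M"
    and X: "X \<in> M \<rightarrow>\<^sub>M count_space UNIV"
  shows "(\<lambda>\<omega>. mlp \<phi> k L d (\<Theta> \<omega>) (X \<omega>)) \<in> borel_measurable M"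
  unfolding mlp_def using \<Theta> hidden_measurable[OF \<phi> \<Theta> X]
  by (intro borel_measurable_sum borel_measurable_times) auto

lemma sgd_step_measurable:
  assumes \<phi>: "\<And>u. \<phi> differentiable (at u)"
    and \<Theta>: "\<And>q. (\<lambda>\<omega>. \<Theta> \<omega> q) \<in> borel_measurable M"
    and X: "X \<in> M \<rightarrow>\<^sub>M count_space UNIV"
    and Y: "Y \<in> borel_measurable M"
  shows "(\<lambda>\<omega>. sgd_step \<phi> k L d \<eta> (X \<omega>, Y \<omega>) (\<Theta> \<omega>) p) \<in> borel_measurable M"
proof -
  have "(\<lambda>\<omega>. (mlp \<phi> k L d ((\<Theta> \<omega>)(p := V \<omega>)) (X \<omega>) - Y \<omega>)\<^sup>2) \<in> borel_measurable M"
    if V: "V \<in> borel_measurable M" for V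
  proof -
    have "(\<lambda>\<omega>. ((\<Theta> \<omega>)(p := V \<omega>)) q) \<in> borel_measurable M" for q
      using \<Theta> V by (cases "q = p") auto
    from mlp_measurable[OF \<phi> this X] show ?thesis
      using Y by measurable
  qed
  then have "(\<lambda>\<omega>. deriv (\<lambda>u. (mlp \<phi> k L d ((\<Theta> \<omega>)(p := u)) (X \<omega>) - Y \<omega>)\<^sup>2) (\<Theta> \<omega> p))
      \<in> borel_measurable M"
    by (intro borel_measurable_deriv sq_loss_differentiable_param \<phi> \<Theta>)
  then show ?thesis
    using \<Theta> by (cases "p \<in> params k L d") (simp_all add: sgd_step_def)
qed

definition init_marginal :: "(nat \<Rightarrow> real) \<Rightarrow> (nat \<Rightarrow> real) \<Rightarrow> 'x pidx \<Rightarrow> real measure" where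
  "init_marginal m sd p = density lborel (normal_density (m (pgroup p)) (sd (pgroup p)))"

lemma init_measure_eq_PiM: "init_measure k L d m sd = PiM (params k L d) (init_marginal m sd)"
  by (simp add: init_measure_def init_marginal_def[abs_def])

lemma prob_space_init_marginal:
  assumes sd: "\<forall>g\<le>L. sd g > 0" and "1 \<le> L" and p: "p \<in> params k L d"
  shows "prob_space (init_marginal m sd p)"
proof -
  have "pgroup p \<le> L"
    using p \<open>1 \<le> L\<close> by (cases p) (auto simp: params_def)
  then show ?thesis
    using sd by (simp add: init_marginal_def prob_space_normal_density)
qed

lemma prob_space_init_measure:
  assumes "\<forall>g\<le>L. sd g > 0" "1 \<le> L"
  shows "prob_space (init_measure k L d m sd)"
  unfolding init_measure_eq_PiM using prob_space_init_marginal[OF assms]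
  by (rule prob_space_PiM)

lemma init_measure_component_measurable:
  "(\<lambda>\<omega>. fst \<omega> p) \<in> borel_measurable (init_measure k L d m sd \<Otimes>\<^sub>M N)"
proof (cases "p \<in> params k L d")
  case True
  then have "(\<lambda>\<theta>. \<theta> p) \<in> init_measure k L d m sd \<rightarrow>\<^sub>M init_marginal m sd p"
    unfolding init_measure_eq_PiM by (rule measurable_component_singleton)
  then have "(\<lambda>\<theta>. \<theta> p) \<in> borel_measurable (init_measure k L d m sd)"
    by (simp add: init_marginal_def cong: measurable_cong_sets)
  then show ?thesis
    by measurable
next
  case False
  \<comment> \<open>outside \<open>params\<close> every initial weight is the junk value \<open>undefined\<close>\<close>
  then have "fst \<omega> p = undefined" if "\<omega> \<in> space (init_measure k L d m sd \<Otimes>\<^sub>M N)" for \<omega>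
    using that by (auto simp: space_pair_measure init_measure_def space_PiM PiE_def extensional_def)
  then show ?thesis
    by (subst measurable_cong[where g="\<lambda>_. undefined"]) auto
qed

definition relabel_weights ::
    "nat \<Rightarrow> nat \<Rightarrow> nat \<Rightarrow> (nat \<Rightarrow> 'x \<Rightarrow> 'x) \<Rightarrow> ('x pidx \<Rightarrow> real) \<Rightarrow> 'x pidx \<Rightarrow> real" where
  "relabel_weights k L d \<pi> \<theta> = (\<lambda>q\<in>params k L d. \<theta> (relabel_first_layer \<pi> q))"

lemma relabel_weights_eq_comp:
  "\<theta> \<in> space (init_measure k L d m sd) \<Longrightarrow> relabel_weights k L d \<pi> \<theta> = \<theta> \<circ> relabel_first_layer \<pi>"
  by (auto simp: fun_eq_iff relabel_weights_def init_measure_def space_PiM PiE_def extensional_def)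

lemma relabel_weights_measurable:
  fixes \<pi> :: "nat \<Rightarrow> 'x \<Rightarrow> 'x"
  shows "relabel_weights k L d \<pi> \<in> init_measure k L d m sd \<rightarrow>\<^sub>M init_measure k L d m sd"
  unfolding init_measure_eq_PiM relabel_weights_def
proof (rule measurable_restrict)
  fix q :: "'x pidx"
  assume "q \<in> params k L d"
  then have "(\<lambda>\<theta>. \<theta> (relabel_first_layer \<pi> q))
      \<in> PiM (params k L d) (init_marginal m sd) \<rightarrow>\<^sub>M init_marginal m sd (relabel_first_layer \<pi> q)"
    by (intro measurable_component_singleton) simp
  then show "(\<lambda>\<theta>. \<theta> (relabel_first_layer \<pi> q))
      \<in> PiM (params k L d) (init_marginal m sd) \<rightarrow>\<^sub>M init_marginal m sd q"
    by (simp add: init_marginal_def)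
qed

lemma distr_init_measure_relabel_weights:
  assumes "\<And>i. inj (\<pi> i)" and "\<forall>g\<le>L. sd g > 0" "1 \<le> L"
  shows "distr (init_measure k L d m sd) (init_measure k L d m sd) (relabel_weights k L d \<pi>)
       = init_measure k L d m sd"
proof -
  have "init_marginal m sd (relabel_first_layer \<pi> q) = init_marginal m sd q" for q
    by (simp add: init_marginal_def)
  moreover have "distr (PiM (params k L d) (init_marginal m sd))
        (\<Pi>\<^sub>M q\<in>params k L d. init_marginal m sd (relabel_first_layer \<pi> q)) (relabel_weights k L d \<pi>)
      = (\<Pi>\<^sub>M q\<in>params k L d. init_marginal m sd (relabel_first_layer \<pi> q))"
    unfolding relabel_weights_def
    using inj_relabel_first_layer[of \<pi>] assms(1)
    by (intro distr_PiM_reindex prob_space_init_marginal[OF assms(2,3)])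
       (auto intro: inj_on_subset)
  ultimately show ?thesis
    by (simp add: init_measure_eq_PiM)
qed

lemma prob_space_noise: "0 \<le> \<sigma> \<Longrightarrow> prob_space (noise \<sigma>)"
  by (auto simp: noise_def intro: prob_space_return prob_space_normal_density)

lemma sets_noise: "sets (noise \<sigma>) = sets borel"
  by (simp add: noise_def)

lemma AE_pair_measure_fst:
  assumes "sigma_finite_measure N" and "AE x in M. P x"
  shows "AE w in M \<Otimes>\<^sub>M N. P (fst w)"
proof -
  interpret sigma_finite_measure N by fact
  from assms(2) obtain B where B: "{x \<in> space M. \<not> P x} \<subseteq> B" "emeasure M B = 0" "B \<in> sets M"
    by (auto elim: AE_E)
  have "B \<times> space N \<in> null_sets (M \<Otimes>\<^sub>M N)"
    using B by (intro times_in_null_sets1) auto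
  moreover have "{w \<in> space (M \<Otimes>\<^sub>M N). \<not> P (fst w)} \<subseteq> B \<times> space N"
    using B by (auto simp: space_pair_measure)
  ultimately show ?thesis by (rule AE_I')
qed

lemma AE_pair_measure_snd:
  assumes "sigma_finite_measure N" and "AE x in N. P x"
  shows "AE w in M \<Otimes>\<^sub>M N. P (snd w)"
proof -
  interpret sigma_finite_measure N by fact
  from assms(2) obtain B where B: "{x \<in> space N. \<not> P x} \<subseteq> B" "emeasure N B = 0" "B \<in> sets N"
    by (auto elim: AE_E)
  have "space M \<times> B \<in> null_sets (M \<Otimes>\<^sub>M N)"
    using B by (intro times_in_null_sets2) auto
  moreover have "{w \<in> space (M \<Otimes>\<^sub>M N). \<not> P (snd w)} \<subseteq> space M \<times> B"
    using B by (auto simp: space_pair_measure)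
  ultimately show ?thesis by (rule AE_I')
qed

definition template_sub_pmf ::
    "('x, 'w) template pmf \<Rightarrow> (('x, 'w) template \<Rightarrow> ('w \<Rightarrow> 'x) pmf) \<Rightarrow> (('x, 'w) template \<times> ('w \<Rightarrow> 'x)) pmf" where
  "template_sub_pmf \<mu> \<mu>sub = bind_pmf \<mu> (\<lambda>z. map_pmf (\<lambda>s. (z, s)) (\<mu>sub z))"

lemma data_dist_eq:
  "data_dist \<mu> \<mu>sub fstar \<sigma> = distr (measure_pmf (template_sub_pmf \<mu> \<mu>sub) \<Otimes>\<^sub>M noise \<sigma>)
     (count_space UNIV \<Otimes>\<^sub>M borel) (\<lambda>((z, s), \<xi>). (sub z s, fstar z + \<xi>))"
  by (simp add: data_dist_def template_sub_pmf_def)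

lemma sample_map_measurable:
  "(\<lambda>((z, s), \<xi>). (sub z s, fstar z + \<xi>))
     \<in> measure_pmf (template_sub_pmf \<mu> \<mu>sub) \<Otimes>\<^sub>M noise \<sigma> \<rightarrow>\<^sub>M count_space UNIV \<Otimes>\<^sub>M borel"
proof -
  have "sets (measure_pmf (template_sub_pmf \<mu> \<mu>sub) \<Otimes>\<^sub>M noise \<sigma>)
      = sets (count_space UNIV \<Otimes>\<^sub>M borel)"
    by (intro sets_pair_measure_cong) (simp_all add: sets_noise)
  moreover
  let ?C = "count_space UNIV :: (('x, 'w) template \<times> ('w \<Rightarrow> 'x)) measure"
  have "(\<lambda>zs. sub (fst zs) (snd zs)) \<circ> fst \<in> ?C \<Otimes>\<^sub>M (borel :: real measure) \<rightarrow>\<^sub>M count_space UNIV"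
    "(\<lambda>zs. fstar (fst zs)) \<circ> fst \<in> borel_measurable (?C \<Otimes>\<^sub>M (borel :: real measure))"
    by (auto intro!: measurable_comp[OF measurable_fst])
  then have "(\<lambda>w. (sub (fst (fst w)) (snd (fst w)), fstar (fst (fst w)) + snd w))
      \<in> ?C \<Otimes>\<^sub>M borel \<rightarrow>\<^sub>M count_space UNIV \<Otimes>\<^sub>M (borel :: real measure)"
    unfolding comp_def by measurable
  ultimately show ?thesis
    by (simp add: split_beta' cong: measurable_cong_sets)
qed

lemma sets_data_dist: "sets (data_dist \<mu> \<mu>sub fstar \<sigma>) = sets (count_space UNIV \<Otimes>\<^sub>M borel)"
  by (simp add: data_dist_eq)

lemma prob_space_data_dist: "0 \<le> \<sigma> \<Longrightarrow> prob_space (data_dist \<mu> \<mu>sub fstar \<sigma>)"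
  unfolding data_dist_eq
  by (intro prob_space.prob_space_distr prob_space_pair prob_space_noise sample_map_measurable
      prob_space_measure_pmf)

lemma AE_data_dist_length:
  assumes "0 \<le> \<sigma>" and len: "\<forall>z \<in> set_pmf \<mu>. length z = k"
  shows "AE p in data_dist \<mu> \<mu>sub fstar \<sigma>. length (fst p) = k"
proof -
  have "AE zs in measure_pmf (template_sub_pmf \<mu> \<mu>sub). length (sub (fst zs) (snd zs)) = k"
    using len by (auto simp: AE_measure_pmf_iff template_sub_pmf_def sub_def)
  then have "AE w in measure_pmf (template_sub_pmf \<mu> \<mu>sub) \<Otimes>\<^sub>M noise \<sigma>.
      length (sub (fst (fst w)) (snd (fst w))) = k"
    by (intro AE_pair_measure_fst prob_space_imp_sigma_finite prob_space_noise assms)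
  moreover have "{p \<in> space (count_space UNIV \<Otimes>\<^sub>M borel). length (fst p) = k}
      \<in> sets (count_space UNIV \<Otimes>\<^sub>M (borel :: real measure))"
    by measurable
  ultimately show ?thesis
    unfolding data_dist_eq by (subst AE_distr_iff[OF sample_map_measurable]) (simp_all add: split_beta')
qed

lemma AE_subset_X_seen:
  fixes D :: "('x::finite list \<times> real) measure"
  shows "AE p in D. set (fst p) \<subseteq> X_seen D"
proof -
  \<comment> \<open>there are only finitely many candidate sets \<open>S\<close>, so the intersection is still almost sure\<close>
  have "AE p in D. \<forall>S\<in>{S. AE p in D. set (fst p) \<subseteq> S}. set (fst p) \<subseteq> S"
    by (rule eventually_ball_finite) auto
  then show ?thesis
    unfolding X_seen_def by (rule AE_mp) auto
qed

lemma sgd_measurable: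
  assumes \<phi>: "\<And>u. \<phi> differentiable (at u)"
    and sets_D: "sets D = sets (count_space UNIV \<Otimes>\<^sub>M borel)"
  shows "s \<le> t \<Longrightarrow>
    (\<lambda>\<omega>. sgd \<phi> k L d \<eta> (fst \<omega>) (snd \<omega>) s p) \<in> borel_measurable (sgd_space k L d m sd D t)"
proof (induction s arbitrary: p)
  case 0
  then show ?case
    by (simp add: sgd_space_def init_measure_component_measurable)
next
  case (Suc s)
  let ?\<Omega> = "sgd_space k L d m sd D t"
  have "(\<lambda>\<omega>. snd \<omega> (Suc s)) \<in> ?\<Omega> \<rightarrow>\<^sub>M D"
    unfolding sgd_space_def using Suc.prems
    by (intro measurable_compose[OF measurable_snd measurable_component_singleton]) simp
  then have sample: "(\<lambda>\<omega>. snd \<omega> (Suc s)) \<in> ?\<Omega> \<rightarrow>\<^sub>M count_space UNIV \<Otimes>\<^sub>M borel"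
    using sets_D by (simp cong: measurable_cong_sets)
  show ?case
    using sgd_step_measurable[OF \<phi> Suc.IH measurable_compose[OF sample measurable_fst]
        measurable_compose[OF sample measurable_snd]] Suc.prems
    by (simp add: comp_def)
qed

lemma prob_space_sgd_space:
  assumes "prob_space D" "\<forall>g\<le>L. sd g > 0" "1 \<le> L"
  shows "prob_space (sgd_space k L d m sd D t)"
  unfolding sgd_space_def
  by (intro prob_space_pair prob_space_init_measure prob_space_PiM assms)

lemma distr_sgd_space_relabel_weights:
  assumes D: "prob_space D" and \<pi>: "\<And>i. inj (\<pi> i)" and sd: "\<forall>g\<le>L. sd g > 0" "1 \<le> L"
  shows "distr (sgd_space k L d m sd D t) (sgd_space k L d m sd D t)
      (\<lambda>\<omega>. (relabel_weights k L d \<pi> (fst \<omega>), snd \<omega>)) = sgd_space k L d m sd D t"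
proof -
  let ?I = "init_measure k L d m sd" and ?P = "PiM {1..t} (\<lambda>_. D)"
  have "sigma_finite_measure (distr ?P ?P (\<lambda>x. x))"
    using D by (simp add: prob_space_imp_sigma_finite prob_space_PiM)
  then have product: "distr ?I ?I (relabel_weights k L d \<pi>) \<Otimes>\<^sub>M distr ?P ?P (\<lambda>x. x)
      = distr (?I \<Otimes>\<^sub>M ?P) (?I \<Otimes>\<^sub>M ?P) (\<lambda>(\<theta>, smp). (relabel_weights k L d \<pi> \<theta>, smp))"
    by (rule pair_measure_distr[OF relabel_weights_measurable measurable_ident[unfolded id_def]])
  have split: "(\<lambda>(\<theta>, smp). (relabel_weights k L d \<pi> \<theta>, smp))
      = (\<lambda>\<omega>. (relabel_weights k L d \<pi> (fst \<omega>), snd \<omega>))"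
    by (simp add: fun_eq_iff)
  show ?thesis
    using product unfolding sgd_space_def distr_init_measure_relabel_weights[OF \<pi> sd] distr_id split
    by (rule sym)
qed

lemma AE_sgd_space_samples_seen:
  fixes D :: "('x::finite list \<times> real) measure"
  assumes D: "prob_space D" and len: "AE p in D. length (fst p) = k"
  shows "AE \<omega> in sgd_space k L d m sd D t. \<forall>j\<in>{1..t}.
     length (fst (snd \<omega> j)) = k \<and> set (fst (snd \<omega> j)) \<subseteq> X_seen D"
  unfolding sgd_space_def
proof (intro AE_pair_measure_snd eventually_ball_finite ballI)
  show "sigma_finite_measure (PiM {1..t} (\<lambda>_. D))"
    using D by (simp add: prob_space_imp_sigma_finite prob_space_PiM)
  show "AE \<omega> in PiM {1..t} (\<lambda>_. D). length (fst (\<omega> j)) = k \<and> set (fst (\<omega> j)) \<subseteq> X_seen D"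
    if "j \<in> {1..t}" for j
    using len AE_subset_X_seen[of D]
    by (intro AE_PiM_component[where M="\<lambda>_. D", OF D that]) auto
qed simp

lemma AE_mlp_sgd_relabel_weights:
  fixes D :: "('x::finite list \<times> real) measure"
  assumes D: "prob_space D" and len: "AE p in D. length (fst p) = k"
    and \<pi>: "\<And>i. inj (\<pi> i)"
    and fixes_seen: "\<And>i a. i < k \<Longrightarrow> a \<in> X_seen D \<Longrightarrow> \<pi> i a = a"
    and moves: "\<And>i. i < k \<Longrightarrow> \<pi> i (x ! i) = x' ! i"
  shows "AE \<omega> in sgd_space k L d m sd D t.
     mlp \<phi> k L d (sgd \<phi> k L d \<eta> (relabel_weights k L d \<pi> (fst \<omega>)) (snd \<omega>) t) x
       = mlp \<phi> k L d (sgd \<phi> k L d \<eta> (fst \<omega>) (snd \<omega>) t) x'"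
  using AE_sgd_space_samples_seen[OF D len]
proof (rule AE_mp, intro AE_I2 impI)
  fix \<omega>
  assume \<omega>: "\<omega> \<in> space (sgd_space k L d m sd D t)"
    and seen: "\<forall>j\<in>{1..t}. length (fst (snd \<omega> j)) = k \<and> set (fst (snd \<omega> j)) \<subseteq> X_seen D"
  have "relabel_weights k L d \<pi> (fst \<omega>) = fst \<omega> \<circ> relabel_first_layer \<pi>"
    using \<omega> by (intro relabel_weights_eq_comp) (auto simp: sgd_space_def space_pair_measure)
  moreover have stable: "\<pi> i (fst (snd \<omega> j) ! i) = fst (snd \<omega> j) ! i" if "j \<in> {1..t}" "i < k" for j i
  proof (rule fixes_seen[OF that(2)])
    show "fst (snd \<omega> j) ! i \<in> X_seen D"
      using seen that by (metis nth_mem subsetD)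
  qed
  ultimately show "mlp \<phi> k L d (sgd \<phi> k L d \<eta> (relabel_weights k L d \<pi> (fst \<omega>)) (snd \<omega>) t) x
      = mlp \<phi> k L d (sgd \<phi> k L d \<eta> (fst \<omega>) (snd \<omega>) t) x'"
    using sgd_relabel_first_layer[where t=t and smp="snd \<omega>", OF \<pi> stable order.refl]
      mlp_relabel_first_layer[where k=k and \<pi>=\<pi> and y=x and y'=x', OF moves]
    by (simp only:)
qed

section \<open>Strings of unseen tokens matching a template\<close>

lemma exists_inj_image_subset:
  fixes A :: "'a::finite set" and U :: "'b::finite set"
  assumes "card A \<le> card U" and "CARD('a) \<le> CARD('b)"
  shows "\<exists>s. inj s \<and> s ` A \<subseteq> U"
proof -
  obtain g where g: "g ` A \<subseteq> U" "inj_on g A"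
    using card_le_inj[OF finite finite assms(1)] by auto
  have "card (- A) \<le> card (- g ` A)"
    using assms(2) by (simp add: Compl_eq_Diff_UNIV card_Diff_subset card_image[OF g(2)])
  then obtain h where h: "h ` (- A) \<subseteq> - g ` A" "inj_on h (- A)"
    using card_le_inj[OF finite finite] by blast
  have "inj_on (\<lambda>w. if w \<in> A then g w else h w) (A \<union> - A)"
    using g h by (intro inj_on_disjoint_Un) auto
  then show ?thesis
    using g(1) by (intro exI[of _ "\<lambda>w. if w \<in> A then g w else h w"]) auto
qed

lemma exists_matching_string:
  fixes z :: "('x::finite, 'w::finite) template" and U :: "'x set"
  assumes wild: "\<forall>c \<in> set z. \<exists>w. c = Inr w" and len: "length z = k"
    and U: "k \<le> card U" and card_le: "CARD('w) \<le> CARD('x)"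
  shows "\<exists>x. length x = k \<and> set x \<subseteq> U \<and> matches x z"
proof -
  let ?W = "{w. Inr w \<in> set z}"
  have "card ?W = card (Inr ` ?W :: ('x + 'w) set)"
    by (simp add: card_image)
  also have "\<dots> \<le> card (set z)"
    by (rule card_mono) auto
  also have "\<dots> \<le> k"
    using len card_length by blast
  finally obtain s where s: "inj s" "s ` ?W \<subseteq> U"
    using exists_inj_image_subset[OF _ card_le] U by (meson order_trans)
  have "set (sub z s) \<subseteq> U"
    using wild s(2) by (fastforce simp: sub_def)
  moreover have "matches (sub z s) z"
    using wild s(1) by (fastforce simp: matches_def)
  ultimately show ?thesis
    using len by (intro exI[of _ "sub z s"]) (simp add: sub_def)
qed

lemma card_wildcards_le_card_tokens:
  fixes \<mu> :: "('x::finite, 'w::finite) template pmf"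
  assumes "template_data k \<mu> \<mu>sub \<sigma>"
  shows "CARD('w) \<le> CARD('x)"
proof -
  obtain z where "z \<in> set_pmf \<mu>"
    using set_pmf_not_empty by fast
  moreover obtain s where "s \<in> set_pmf (\<mu>sub z)"
    using set_pmf_not_empty by fast
  ultimately have "inj s"
    using assms by (simp add: template_data_def)
  then show ?thesis
    by (rule card_inj_on_le) simp_all
qed

section \<open>Expected squared loss\<close>

lemma nn_integral_measure_preserving_AE:
  assumes T: "T \<in> M \<rightarrow>\<^sub>M M" "distr M M T = M" and f: "f \<in> borel_measurable M"
    and eq: "AE x in M. f (T x) = g x"
  shows "(\<integral>\<^sup>+ x. f x \<partial>M) = (\<integral>\<^sup>+ x. g x \<partial>M)"
proof -
  have "(\<integral>\<^sup>+ x. f x \<partial>M) = (\<integral>\<^sup>+ x. f x \<partial>distr M M T)"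
    by (simp only: T(2))
  also have "\<dots> = (\<integral>\<^sup>+ x. f (T x) \<partial>M)"
    by (rule nn_integral_distr[OF T(1)]) (use f in simp)
  also have "\<dots> = (\<integral>\<^sup>+ x. g x \<partial>M)"
    using eq by (rule nn_integral_cong_AE)
  finally show ?thesis .
qed

lemma nn_integral_sq_dist_two_points:
  fixes f :: "'a \<Rightarrow> real"
  assumes M: "prob_space M" and f [measurable]: "f \<in> borel_measurable M"
  shows "ennreal ((a - b)\<^sup>2 / 4) \<le> (\<integral>\<^sup>+ x. ennreal ((f x - a)\<^sup>2) \<partial>M) \<or>
         ennreal ((a - b)\<^sup>2 / 4) \<le> (\<integral>\<^sup>+ x. ennreal ((f x - b)\<^sup>2) \<partial>M)"
proof (rule ccontr)
  let ?c = "(a - b)\<^sup>2 / 4"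
  assume "\<not> ?thesis"
  then have "(\<integral>\<^sup>+ x. ennreal ((f x - a)\<^sup>2) \<partial>M) + (\<integral>\<^sup>+ x. ennreal ((f x - b)\<^sup>2) \<partial>M)
      < ennreal ?c + ennreal ?c"
    by (simp add: not_le add_strict_mono)
  also have "\<dots> = (\<integral>\<^sup>+ x. ennreal (?c + ?c) \<partial>M)"
    using prob_space.emeasure_space_1[OF M] by (simp add: ennreal_plus[symmetric] del: ennreal_plus)
  also have "\<dots> \<le> (\<integral>\<^sup>+ x. ennreal ((f x - a)\<^sup>2) + ennreal ((f x - b)\<^sup>2) \<partial>M)"
  proof (rule nn_integral_mono)
    fix x
    have "(f x - a)\<^sup>2 + (f x - b)\<^sup>2 = 2 * (f x - (a + b) / 2)\<^sup>2 + (a - b)\<^sup>2 / 2"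
      by (simp add: power2_eq_square field_simps)
    then show "ennreal (?c + ?c) \<le> ennreal ((f x - a)\<^sup>2) + ennreal ((f x - b)\<^sup>2)"
      by (simp add: ennreal_plus[symmetric] del: ennreal_plus)
  qed
  also have "\<dots> = (\<integral>\<^sup>+ x. ennreal ((f x - a)\<^sup>2) \<partial>M) + (\<integral>\<^sup>+ x. ennreal ((f x - b)\<^sup>2) \<partial>M)"
    by (intro nn_integral_add) measurable
  finally show False
    by simp
qed

lemma expected_sq_loss_unseen_pair:
  fixes D :: "('x::finite list \<times> real) measure" and x1 x2 :: "'x list"
    and k L d t :: nat and m sd \<eta> :: "nat \<Rightarrow> real" and \<phi> :: "real \<Rightarrow> real"
  defines "\<Omega> \<equiv> sgd_space k L d m sd D t"
    and "G \<equiv> \<lambda>x \<omega>. mlp \<phi> k L d (sgd \<phi> k L d \<eta> (fst \<omega>) (snd \<omega>) t) x"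
  assumes D: "prob_space D" "sets D = sets (count_space UNIV \<Otimes>\<^sub>M borel)"
    and len: "AE p in D. length (fst p) = k"
    and \<phi>: "\<And>u. \<phi> differentiable (at u)" and sd: "\<forall>g\<le>L. sd g > 0" "1 \<le> L"
    and x1: "length x1 = k" "set x1 \<subseteq> X_uns D" and x2: "length x2 = k" "set x2 \<subseteq> X_uns D"
  shows "ennreal ((a - b)\<^sup>2 / 4) \<le> (\<integral>\<^sup>+ \<omega>. ennreal ((G x1 \<omega> - a)\<^sup>2) \<partial>\<Omega>) \<or>
         ennreal ((a - b)\<^sup>2 / 4) \<le> (\<integral>\<^sup>+ \<omega>. ennreal ((G x2 \<omega> - b)\<^sup>2) \<partial>\<Omega>)"
proof -
  define \<pi> where "\<pi> i = Transposition.transpose (x1 ! i) (x2 ! i)" for i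
  let ?T = "\<lambda>\<omega>. (relabel_weights k L d \<pi> (fst \<omega>), snd \<omega>)"
  have \<pi>_inj: "inj (\<pi> i)" for i
    by (simp add: \<pi>_def inj_transpose)
  have unseen: "x1 ! i \<notin> X_seen D" "x2 ! i \<notin> X_seen D" if "i < k" for i
  proof -
    have "x1 ! i \<in> X_uns D" "x2 ! i \<in> X_uns D"
      using that x1 x2 by (metis nth_mem subsetD)+
    then show "x1 ! i \<notin> X_seen D" "x2 ! i \<notin> X_seen D"
      by (simp_all add: X_uns_def)
  qed
  have G_measurable [measurable]: "G x \<in> borel_measurable \<Omega>" for x
    unfolding G_def \<Omega>_def by (rule mlp_measurable[OF \<phi> sgd_measurable[OF \<phi> D(2)]]) simp_all
  have T: "?T \<in> \<Omega> \<rightarrow>\<^sub>M \<Omega>" "distr \<Omega> \<Omega> ?T = \<Omega>"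
    unfolding \<Omega>_def sgd_space_def
    by (intro measurable_Pair measurable_compose[OF measurable_fst relabel_weights_measurable]
        measurable_snd)
      (rule distr_sgd_space_relabel_weights[OF D(1) \<pi>_inj sd, unfolded sgd_space_def])
  have "AE \<omega> in \<Omega>. G x1 (?T \<omega>) = G x2 \<omega>"
    unfolding \<Omega>_def G_def prod.sel
    by (rule AE_mlp_sgd_relabel_weights[OF D(1) len \<pi>_inj])
      (use unseen in \<open>auto simp: \<pi>_def Transposition.transpose_def\<close>)
  then have "AE \<omega> in \<Omega>. ennreal ((G x1 (?T \<omega>) - a)\<^sup>2) = ennreal ((G x2 \<omega> - a)\<^sup>2)"
    by (rule eventually_mono) (simp only:)
  then have "(\<integral>\<^sup>+ \<omega>. ennreal ((G x1 \<omega> - a)\<^sup>2) \<partial>\<Omega>) = (\<integral>\<^sup>+ \<omega>. ennreal ((G x2 \<omega> - a)\<^sup>2) \<partial>\<Omega>)"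
    by (intro nn_integral_measure_preserving_AE[OF T]) measurable
  moreover have "prob_space \<Omega>"
    unfolding \<Omega>_def by (rule prob_space_sgd_space[OF D(1) sd])
  ultimately show ?thesis
    using nn_integral_sq_dist_two_points[OF _ G_measurable[of x2], of a b] by simp
qed

theorem mainTheorem16:
  fixes \<mu> :: "('x::finite, 'w::finite) template pmf"
    and fstar :: "('x, 'w) template \<Rightarrow> real"
    and k :: nat
  assumes len: "\<forall>z \<in> set_pmf \<mu>. length z = k"
    and wild: "\<forall>z \<in> set_pmf \<mu>. \<forall>c \<in> set z. \<exists>w. c = Inr w"
    and noncst: "\<exists>z1 \<in> set_pmf \<mu>. \<exists>z2 \<in> set_pmf \<mu>. fstar z1 \<noteq> fstar z2"
  shows "\<exists>c > 0. \<forall>\<mu>sub \<sigma> (\<phi>::real \<Rightarrow> real) L d m sd \<eta> t.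
     template_data k \<mu> \<mu>sub \<sigma> \<and>
     card (X_uns (data_dist \<mu> \<mu>sub fstar \<sigma>)) \<ge> k \<and>
     (\<forall>u. \<phi> differentiable (at u)) \<and> 1 \<le> L \<and>
     (\<forall>g \<le> L. sd g > 0) \<and> (\<forall>s. \<eta> s > 0)
     \<longrightarrow> (\<exists>x z. z \<in> set_pmf \<mu> \<and> length x = k \<and> set x \<subseteq> X_uns (data_dist \<mu> \<mu>sub fstar \<sigma>) \<and>
            matches x z \<and>
            (\<integral>\<^sup>+ \<omega>. ennreal ((mlp \<phi> k L d (sgd \<phi> k L d \<eta> (fst \<omega>) (snd \<omega>) t) x - fstar z)\<^sup>2)
               \<partial>sgd_space k L d m sd (data_dist \<mu> \<mu>sub fstar \<sigma>) t) \<ge> ennreal c)"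
proof -
  obtain z1 z2 where z: "z1 \<in> set_pmf \<mu>" "z2 \<in> set_pmf \<mu>" and "fstar z1 \<noteq> fstar z2"
    using noncst by blast
  then have "(fstar z1 - fstar z2)\<^sup>2 / 4 > 0"
    by simp
  moreover
  {
    fix \<mu>sub \<sigma> and \<phi> :: "real \<Rightarrow> real" and L d t :: nat and m sd \<eta> :: "nat \<Rightarrow> real"
    let ?D = "data_dist \<mu> \<mu>sub fstar \<sigma>"
    assume td: "template_data k \<mu> \<mu>sub \<sigma>" and U: "card (X_uns ?D) \<ge> k"
      and \<phi>: "\<forall>u. \<phi> differentiable (at u)" and sd: "1 \<le> L" "\<forall>g \<le> L. sd g > 0"
    obtain x1 x2 where x1: "length x1 = k" "set x1 \<subseteq> X_uns ?D" "matches x1 z1"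
      and x2: "length x2 = k" "set x2 \<subseteq> X_uns ?D" "matches x2 z2"
      using exists_matching_string[OF _ _ U card_wildcards_le_card_tokens[OF td]] wild len z by metis
    have D: "prob_space ?D" "sets ?D = sets (count_space UNIV \<Otimes>\<^sub>M borel)"
      "AE p in ?D. length (fst p) = k"
      using td len
      by (simp_all add: template_data_def prob_space_data_dist sets_data_dist AE_data_dist_length)
    from expected_sq_loss_unseen_pair[OF D \<phi>[rule_format] sd(2,1) x1(1,2) x2(1,2)]
    have "\<exists>x z. z \<in> set_pmf \<mu> \<and> length x = k \<and> set x \<subseteq> X_uns ?D \<and> matches x z \<and>
        (\<integral>\<^sup>+ \<omega>. ennreal ((mlp \<phi> k L d (sgd \<phi> k L d \<eta> (fst \<omega>) (snd \<omega>) t) x - fstar z)\<^sup>2)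
           \<partial>sgd_space k L d m sd ?D t) \<ge> ennreal ((fstar z1 - fstar z2)\<^sup>2 / 4)"
      using x1 x2 z by blast
  }
  ultimately show ?thesis
    by blast
qed

end
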